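(* In the setting below, let $i\neq j$, put $m=1-(\alpha_i|\alpha_j)$, fix a sign $\epsilon\in\{+,-\}$, and for $n\in\mathbb Z$ define the $\mathrm{End}(\mathcal F)$-valued formal series $$S_n(z_1,\dots,z_m)=\sum_{\sigma\in S_m}\sum_{r=0}^{m}(-1)^r\begin{bmatrix} m\\ r\end{bmatrix}X_i^{\epsilon}(z_{\sigma(1)})\cdots X_i^{\epsilon}(z_{\sigma(r)})\,X_j^{\epsilon}(n)\,X_i^{\epsilon}(z_{\sigma(r+1)})\cdots X_i^{\epsilon}(z_{\sigma(m)}).$$ Suppose there is an index $k$ with $(\alpha_k|\alpha_i)=0$ and $(\alpha_k|\alpha_j)\neq0$. If $S_n=0$ for some $n\in\mathbb Z$, then $S_n=0$ for every $n\in\mathbb Z$; equivalently the full relation $\sum_{\sigma\in S_m}\sum_{r=0}^{m}(-1)^r\begin{bmatrix} m\\ r\end{bmatrix}X_i^{\epsilon}(z_{\sigma(1)})\cdots X_i^{\epsilon}(z_{\sigma(r)})X_j^{\epsilon}(w)X_i^{\epsilon}(z_{\sigma(r+1)})\cdots X_i^{\epsilon}(z_{\sigma(m)})=0$ holds.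
   Context: Let $A=(a_{ij})_{i,j=1}^l$ be a symmetric generalized Cartan matrix ($a_{ii}=2$, $a_{ij}=a_{ji}\in\mathbb Z_{\le0}$ for $i\ne j$). Let $Q=\bigoplus_{i=1}^l\mathbb Z\alpha_i$ carry the symmetric bilinear form with $(\alpha_i|\alpha_j)=a_{ij}$. Fix $q\in\mathbb C^\times$, not a root of unity, and a square root $q^{1/2}$; write $[n]=\frac{q^n-q^{-n}}{q-q^{-1}}$, $[n]!=[1]\cdots[n]$, $\begin{bmatrix} m\\ r\end{bmatrix}=\frac{[m]!}{[r]![m-r]!}$. Fock space: $\mathcal F=S\otimes\mathbb C\{Q\}$. Here $S$ is the polynomial algebra in the indeterminates $a_i(-n)$ ($1\le i\le l$, $n\ge1$); $a_i(-n)$ acts on $S$ by multiplication and, for $n>0$, $a_i(n)$ acts as the derivation of $S$ with $a_i(n)\cdot a_j(-m)=\delta_{nm}\frac{[(\alpha_i|\alpha_j)n][n]}{n}$, so that $[a_i(m),a_j(n)]=\delta_{m+n,0}\frac{[(\alpha_i|\alpha_j)m][m]}{m}$ for $m,n\neq0$. $\mathbb C\{Q\}$ is the twisted group algebra with basis $e^\beta$ ($\beta\in Q$) and product $e^\alpha e^\beta=\varepsilon(\alpha,\beta)e^{\alpha+\beta}$, where $\varepsilon:Q\times Q\to\{\pm1\}$ is bimultiplicative with $\varepsilon(\alpha,\beta)\varepsilon(\beta,\alpha)^{-1}=(-1)^{(\alpha|\beta)}$, so $e^\alpha e^\beta=(-1)^{(\alpha|\beta)}e^\beta e^\alpha$.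 On $\mathcal F$, $e^\alpha$ acts by left multiplication on the second factor, $a_i(0)(u\otimes e^\beta)=(\alpha_i|\beta)\,u\otimes e^\beta$, and $z^{\pm a_i(0)}(u\otimes e^\beta)=z^{\pm(\alpha_i|\beta)}u\otimes e^\beta$. Vertex operators: with $E^{\pm}_{-}(i,z)=\exp\big(\pm\sum_{n\ge1}\frac{a_i(-n)}{[n]}q^{\mp n/2}z^n\big)$ and $E^{\pm}_{+}(i,z)=\exp\big(\mp\sum_{n\ge1}\frac{a_i(n)}{[n]}q^{\mp n/2}z^{-n}\big)$, set $X_i^{\pm}(z)=E^{\pm}_-(i,z)E^{\pm}_+(i,z)\,e^{\pm\alpha_i}z^{\pm a_i(0)}=\sum_{n\in\mathbb Z}X_i^{\pm}(n)z^{-n-1}$. The symmetric group $S_m$ permutes the variables $z_1,\dots,z_m$. *)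

theory Defs
  imports Complex_Main "HOL-Library.Poly_Mapping" "HOL-Computational_Algebra.Polynomial"
    "HOL-Combinatorics.Permutations"
begin

definition qint :: "complex \<Rightarrow> int \<Rightarrow> complex" where
  "qint q n = (q powi n - q powi (- n)) / (q - inverse q)"

definition qfact :: "complex \<Rightarrow> nat \<Rightarrow> complex" where
  "qfact q n = (\<Prod>k\<in>{1..n}. qint q (int k))"

definition qbinom :: "complex \<Rightarrow> nat \<Rightarrow> nat \<Rightarrow> complex" where
  "qbinom q m r = qfact q m / (qfact q r * qfact q (m - r))"

section \<open>Root lattice Q (indices 1..l), elements as integer coordinate vectors\<close>

type_synonym lat = "nat \<Rightarrow> int"

definition inQ :: "nat \<Rightarrow> lat \<Rightarrow> bool" where
  "inQ l \<beta> \<longleftrightarrow> (\<forall>k. k \<notin> {1..l} \<longrightarrow> \<beta> k = 0)"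

definition sroot :: "nat \<Rightarrow> lat" where
  "sroot i = (\<lambda>k. if k = i then 1 else 0)"

definition ladd :: "lat \<Rightarrow> lat \<Rightarrow> lat" where
  "ladd \<beta> \<gamma> = (\<lambda>k. \<beta> k + \<gamma> k)"

definition sscale :: "int \<Rightarrow> lat \<Rightarrow> lat" where
  "sscale s \<beta> = (\<lambda>k. s * \<beta> k)"

text \<open>The bilinear form (alpha_j | alpha_k) = A j k extended bilinearly.\<close>
definition form :: "nat \<Rightarrow> (nat \<Rightarrow> nat \<Rightarrow> int) \<Rightarrow> lat \<Rightarrow> lat \<Rightarrow> int" where
  "form l A \<beta> \<gamma> = (\<Sum>j\<in>{1..l}. \<Sum>k\<in>{1..l}. \<beta> j * A j k * \<gamma> k)"

definition sym_GCM :: "nat \<Rightarrow> (nat \<Rightarrow> nat \<Rightarrow> int) \<Rightarrow> bool" where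
  "sym_GCM l A \<longleftrightarrow> (\<forall>i\<in>{1..l}. A i i = 2) \<and>
     (\<forall>i\<in>{1..l}. \<forall>j\<in>{1..l}. i \<noteq> j \<longrightarrow> A i j = A j i \<and> A i j \<le> 0)"

definition cocycle :: "nat \<Rightarrow> (nat \<Rightarrow> nat \<Rightarrow> int) \<Rightarrow> (lat \<Rightarrow> lat \<Rightarrow> int) \<Rightarrow> bool" where
  "cocycle l A eps \<longleftrightarrow>
     (\<forall>\<alpha> \<beta>. inQ l \<alpha> \<longrightarrow> inQ l \<beta> \<longrightarrow> eps \<alpha> \<beta> \<in> {1, -1}) \<and>
     (\<forall>\<alpha> \<alpha>' \<beta>. inQ l \<alpha> \<longrightarrow> inQ l \<alpha>' \<longrightarrow> inQ l \<beta> \<longrightarrow>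
        eps (ladd \<alpha> \<alpha>') \<beta> = eps \<alpha> \<beta> * eps \<alpha>' \<beta>) \<and>
     (\<forall>\<alpha> \<beta> \<beta>'. inQ l \<alpha> \<longrightarrow> inQ l \<beta> \<longrightarrow> inQ l \<beta>' \<longrightarrow>
        eps \<alpha> (ladd \<beta> \<beta>') = eps \<alpha> \<beta> * eps \<alpha> \<beta>') \<and>
     (\<forall>\<alpha> \<beta>. inQ l \<alpha> \<longrightarrow> inQ l \<beta> \<longrightarrow>
        complex_of_int (eps \<alpha> \<beta>) / complex_of_int (eps \<beta> \<alpha>) = (-1) powi (form l A \<alpha> \<beta>))"

text \<open>The indeterminate a_j(-n) is the variable (j,n).\<close>
type_synonym mon = "(nat \<times> nat) \<Rightarrow>\<^sub>0 nat"
type_synonym S = "mon \<Rightarrow>\<^sub>0 complex"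
text \<open>A vector of F = S \<otimes> C{Q} is a finite sum  sum_beta u_beta \<otimes> e^beta.\<close>
type_synonym F = "lat \<Rightarrow>\<^sub>0 S"

definition smul :: "complex \<Rightarrow> S \<Rightarrow> S" where
  "smul c u = Poly_Mapping.map (\<lambda>x. c * x) u"

definition fscale :: "complex \<Rightarrow> F \<Rightarrow> F" where
  "fscale c v = Poly_Mapping.map (smul c) v"

definition var :: "nat \<Rightarrow> nat \<Rightarrow> S" where
  "var j n = Poly_Mapping.single (Poly_Mapping.single (j, n) 1) 1"

definition pderiv_var :: "nat \<times> nat \<Rightarrow> S \<Rightarrow> S" where
  "pderiv_var v f = (\<Sum>\<mu>\<in>Poly_Mapping.keys f.
     smul (Poly_Mapping.lookup f \<mu> * of_nat (Poly_Mapping.lookup (\<mu>::mon) v))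
          (Poly_Mapping.single (\<mu> - Poly_Mapping.single v 1) 1))"

text \<open>a_i(n), n > 0: the derivation with a_i(n) a_j(-m) = delta_nm [a_ij n][n]/n.\<close>
definition a_op :: "complex \<Rightarrow> nat \<Rightarrow> (nat \<Rightarrow> nat \<Rightarrow> int) \<Rightarrow> nat \<Rightarrow> nat \<Rightarrow> S \<Rightarrow> S" where
  "a_op q l A i n f = (\<Sum>j\<in>{1..l}.
     smul (qint q (A i j * int n) * qint q (int n) / of_nat n) (pderiv_var (j, n) f))"

definition wdeg :: "S \<Rightarrow> nat" where
  "wdeg u = (\<Sum>\<mu>\<in>Poly_Mapping.keys u. \<Sum>v\<in>Poly_Mapping.keys \<mu>. snd v * Poly_Mapping.lookup \<mu> v)"

text \<open>E^s_+(i,z) u, as a polynomial in w = z^(-1) with coefficients in S.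
  The exponent is Z = sum_n D_n w^n with D_n = -s q^(-s n/2)/[n] a_i(n); exp(Z) u =
  sum_p Z^p u / p!.  On u, D_n = 0 for n > wdeg u and Z^p u = 0 for p > wdeg u, so
  the truncation at B = wdeg u is exact.\<close>
definition Dop :: "complex \<Rightarrow> complex \<Rightarrow> nat \<Rightarrow> (nat \<Rightarrow> nat \<Rightarrow> int) \<Rightarrow> int \<Rightarrow> nat \<Rightarrow> nat \<Rightarrow> S \<Rightarrow> S" where
  "Dop q qh l A s i n f = smul (- of_int s * qh powi (- s * int n) / qint q (int n)) (a_op q l A i n f)"

definition Zop :: "complex \<Rightarrow> complex \<Rightarrow> nat \<Rightarrow> (nat \<Rightarrow> nat \<Rightarrow> int) \<Rightarrow> int \<Rightarrow> nat \<Rightarrow> nat \<Rightarrow> S poly \<Rightarrow> S poly" where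
  "Zop q qh l A s i B p = (\<Sum>n\<in>{1..B}. monom 1 n * map_poly (Dop q qh l A s i n) p)"

definition Eplus :: "complex \<Rightarrow> complex \<Rightarrow> nat \<Rightarrow> (nat \<Rightarrow> nat \<Rightarrow> int) \<Rightarrow> int \<Rightarrow> nat \<Rightarrow> S \<Rightarrow> S poly" where
  "Eplus q qh l A s i u = (let B = wdeg u in
     (\<Sum>p\<in>{0..B}. map_poly (smul (1 / fact p)) ((Zop q qh l A s i B ^^ p) [:u:])))"

text \<open>coefficient of z^k in E^s_-(i,z) = exp(Y), Y = sum_n s q^(-s n/2)/[n] a_i(-n) z^n;
  only the terms n <= k of Y and the powers p <= k contribute.\<close>
definition Ycut :: "complex \<Rightarrow> complex \<Rightarrow> int \<Rightarrow> nat \<Rightarrow> nat \<Rightarrow> S poly" where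
  "Ycut q qh s i k = (\<Sum>n\<in>{1..k}.
     monom (smul (of_int s * qh powi (- s * int n) / qint q (int n)) (var i n)) n)"

definition Mcoef :: "complex \<Rightarrow> complex \<Rightarrow> int \<Rightarrow> nat \<Rightarrow> int \<Rightarrow> S" where
  "Mcoef q qh s i k = (if k < 0 then 0 else
     (\<Sum>p\<in>{0..nat k}. smul (1 / fact p) (coeff (Ycut q qh s i (nat k) ^ p) (nat k))))"

text \<open>The mode X^s_i(n) of X^s_i(z) = sum_n X^s_i(n) z^(-n-1), acting on F:
  X^s_i(z)(u \<otimes> e^beta) = eps(s alpha_i, beta) z^(s(alpha_i|beta)) E_-(z) E_+(z) u \<otimes> e^(beta + s alpha_i).\<close>
definition Xmode :: "complex \<Rightarrow> complex \<Rightarrow> nat \<Rightarrow> (nat \<Rightarrow> nat \<Rightarrow> int) \<Rightarrow> (lat \<Rightarrow> lat \<Rightarrow> int)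
    \<Rightarrow> int \<Rightarrow> nat \<Rightarrow> int \<Rightarrow> F \<Rightarrow> F" where
  "Xmode q qh l A eps s i n v = (\<Sum>\<beta>\<in>Poly_Mapping.keys v.
     (let u = Poly_Mapping.lookup v \<beta>; E = Eplus q qh l A s i u; d = s * form l A (sroot i) \<beta> in
      Poly_Mapping.single (ladd \<beta> (sscale s (sroot i)))
        (smul (of_int (eps (sscale s (sroot i)) \<beta>))
          (\<Sum>k\<in>{0..Polynomial.degree E}. Mcoef q qh s i (int k - n - 1 - d) * coeff E k))))"

definition opprod :: "(F \<Rightarrow> F) list \<Rightarrow> F \<Rightarrow> F" where
  "opprod fs = foldr (\<circ>) fs id"

definition validF :: "nat \<Rightarrow> F \<Rightarrow> bool" where
  "validF l v \<longleftrightarrow> (\<forall>\<beta>\<in>Poly_Mapping.keys v. inQ l \<beta> \<and>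
     (\<forall>\<mu>\<in>Poly_Mapping.keys (Poly_Mapping.lookup v \<beta>). \<forall>x\<in>Poly_Mapping.keys \<mu>. fst x \<in> {1..l} \<and> snd x \<ge> 1))"

text \<open>Coefficient of z_1^(-n_1-1) ... z_m^(-n_m-1) of S_n(z_1,...,z_m), applied to v,
  with m = 1 - (alpha_i|alpha_j).\<close>
definition Scoef :: "complex \<Rightarrow> complex \<Rightarrow> nat \<Rightarrow> (nat \<Rightarrow> nat \<Rightarrow> int) \<Rightarrow> (lat \<Rightarrow> lat \<Rightarrow> int)
    \<Rightarrow> int \<Rightarrow> nat \<Rightarrow> nat \<Rightarrow> int \<Rightarrow> (nat \<Rightarrow> int) \<Rightarrow> F \<Rightarrow> F" where
  "Scoef q qh l A eps s i j n ns v = (let m = nat (1 - A i j); X = Xmode q qh l A eps s in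
     (\<Sum>\<sigma>\<in>{\<sigma>. \<sigma> permutes {1..m}}. \<Sum>r\<in>{0..m}.
        fscale ((-1) ^ r * qbinom q m r)
          (opprod (map (\<lambda>t. X i (ns (\<sigma> t))) [1..<r+1] @ [X j n] @
                   map (\<lambda>t. X i (ns (\<sigma> t))) [r+1..<m+1]) v)))"

text \<open>S_n = 0 as an End(F)-valued formal series: every coefficient vanishes on F.\<close>
definition S_zero :: "complex \<Rightarrow> complex \<Rightarrow> nat \<Rightarrow> (nat \<Rightarrow> nat \<Rightarrow> int) \<Rightarrow> (lat \<Rightarrow> lat \<Rightarrow> int)
    \<Rightarrow> int \<Rightarrow> nat \<Rightarrow> nat \<Rightarrow> int \<Rightarrow> bool" where
  "S_zero q qh l A eps s i j n \<longleftrightarrow>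
     (\<forall>ns v. validF l v \<longrightarrow> Scoef q qh l A eps s i j n ns v = 0)"

end

theory Submission
  imports Defs
begin

text \<open>Two operators on the Fock space move the mode \<open>n\<close> of \<open>X\<^sub>j\<close> while leaving the factors
  \<open>X\<^sub>i\<close> essentially untouched.

  Multiplication by \<open>a\<^sub>k(-m)\<close> commutes with every \<open>X\<^sub>i(n)\<close>, because \<open>a\<^sub>i(m)\<close> and \<open>a\<^sub>k(-m)\<close>
  commute when \<open>(\<alpha>\<^sub>i|\<alpha>\<^sub>k) = 0\<close>, whereas \<open>X\<^sub>j(n) a\<^sub>k(-m) = a\<^sub>k(-m) X\<^sub>j(n) + c X\<^sub>j(n - m)\<close> with
  \<open>c\<close> a nonzero multiple of \<open>[m(\<alpha>\<^sub>j|\<alpha>\<^sub>k)]\<close>. Evaluating \<open>S\<^sub>n\<close> on \<open>a\<^sub>k(-1) v\<close> therefore shows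
  that \<open>S\<^sub>n = 0\<close> forces \<open>S\<^bsub>n-1\<^esub> = 0\<close>.

  Left multiplication by \<open>e\<^sup>\<gamma>\<close> satisfies \<open>X\<^sub>a(n) e\<^sup>\<gamma> = \<plusminus>e\<^sup>\<gamma> X\<^sub>a(n + s(\<alpha>\<^sub>a|\<gamma>))\<close>, so \<open>S\<^sub>n e\<^sup>\<gamma>\<close>
  equals, up to a sign and a relabelling of the modes of the \<open>X\<^sub>i\<close>, \<open>e\<^sup>\<gamma> S\<^bsub>n+s(\<alpha>\<^sub>j|\<gamma>)\<^esub>\<close>.
  Taking \<open>\<gamma> = \<plusminus>\<alpha>\<^sub>k\<close> raises \<open>n\<close> by \<open>|(\<alpha>\<^sub>j|\<alpha>\<^sub>k)| \<ge> 1\<close>; together with the first move this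
  reaches every integer from a single \<open>n\<^sub>0\<close>.\<close>

section \<open>Annihilation operators on the polynomial algebra\<close>

abbreviation lookup :: "('a \<Rightarrow>\<^sub>0 'b::zero) \<Rightarrow> 'a \<Rightarrow> 'b" where
  "lookup \<equiv> Poly_Mapping.lookup"

abbreviation keys :: "('a \<Rightarrow>\<^sub>0 'b::zero) \<Rightarrow> 'a set" where
  "keys \<equiv> Poly_Mapping.keys"

abbreviation scalar :: "complex \<Rightarrow> S" where
  "scalar c \<equiv> Poly_Mapping.single 0 c"

abbreviation unit_mon :: "nat \<times> nat \<Rightarrow> mon" where
  "unit_mon x \<equiv> Poly_Mapping.single x 1"

lemma smul_eq_scalar_mult: "smul c u = scalar c * u"
  unfolding smul_def by (rule mult_map_scale_conv_mult)

lemma lookup_map_zero: "f 0 = 0 \<Longrightarrow> lookup (Poly_Mapping.map f p) k = f (lookup p k)"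
  by (simp add: Poly_Mapping.map.rep_eq when_def)

lemma lookup_scalar_mult: "lookup (scalar c * u) \<mu> = c * lookup u \<mu>"
  by (metis lookup_map_zero mult_map_scale_conv_mult mult_zero_right)

lemma scalar_mult_scalar: "scalar a * scalar b = scalar (a * b)"
  by (simp add: mult_single)

lemma scalar_add: "scalar a + scalar b = scalar (a + b)"
  by (simp add: single_add)

lemma scalar_mult_eq_0_iff: "c \<noteq> 0 \<Longrightarrow> scalar c * u = 0 \<longleftrightarrow> u = 0"
  by (metis lookup_scalar_mult mult_eq_0_iff poly_mapping_eqI lookup_zero mult_zero_right)

lemma keys_scalar_mult: "keys (scalar c * u) \<subseteq> keys u"
  by (auto simp: in_keys_iff lookup_scalar_mult)

lemma minus_unit_mon_eq_iff:
  assumes "0 < lookup \<nu> x"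
  shows "\<nu> - unit_mon x = \<mu> \<longleftrightarrow> \<nu> = \<mu> + unit_mon x"
proof
  assume "\<nu> - unit_mon x = \<mu>"
  then have "lookup \<mu> y = lookup \<nu> y - lookup (unit_mon x) y" for y
    by (metis lookup_minus)
  then show "\<nu> = \<mu> + unit_mon x"
    using assms by (intro poly_mapping_eqI) (auto simp: lookup_add lookup_single when_def)
qed (simp add: poly_mapping_eq_iff fun_eq_iff lookup_minus lookup_add)

lemma lookup_pderiv_var:
  "lookup (pderiv_var x f) \<mu> = of_nat (lookup \<mu> x + 1) * lookup f (\<mu> + unit_mon x)"
proof -
  have "lookup (pderiv_var x f) \<mu> =
      (\<Sum>\<nu>\<in>keys f. if \<nu> = \<mu> + unit_mon x then lookup f \<nu> * of_nat (lookup \<nu> x) else 0)"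
    unfolding pderiv_var_def smul_def lookup_sum
  proof (intro sum.cong refl)
    fix \<nu>
    show "lookup (Poly_Mapping.map ((*) (lookup f \<nu> * of_nat (lookup \<nu> x)))
          (Poly_Mapping.single (\<nu> - unit_mon x) 1)) \<mu> =
        (if \<nu> = \<mu> + unit_mon x then lookup f \<nu> * of_nat (lookup \<nu> x) else 0)"
    proof (cases "lookup \<nu> x = 0")
      case False
      then have "\<nu> - unit_mon x = \<mu> \<longleftrightarrow> \<nu> = \<mu> + unit_mon x"
        by (intro minus_unit_mon_eq_iff) simp
      then show ?thesis by (simp add: lookup_single when_def)
    qed (auto simp: lookup_single when_def lookup_add)
  qed
  also have "\<dots> = of_nat (lookup \<mu> x + 1) * lookup f (\<mu> + unit_mon x)"
    by (auto simp: sum.delta lookup_add in_keys_iff mult.commute)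
  finally show ?thesis .
qed

lemma lookup_var_mult:
  "lookup (var j n * f) \<mu> =
    (if 0 < lookup \<mu> (j, n) then lookup f (\<mu> - unit_mon (j, n)) else 0)"
proof -
  have "lookup (var j n * f) \<mu> = (\<Sum>\<nu>. lookup f \<nu> when \<mu> = unit_mon (j, n) + \<nu>)"
    unfolding var_def lookup_mult by (simp add: lookup_single when_mult)
  also have "\<dots> = (if 0 < lookup \<mu> (j, n) then lookup f (\<mu> - unit_mon (j, n)) else 0)"
  proof (cases "0 < lookup \<mu> (j, n)")
    case True
    then have "\<mu> = unit_mon (j, n) + \<nu> \<longleftrightarrow> \<nu> = \<mu> - unit_mon (j, n)" for \<nu>
      using minus_unit_mon_eq_iff[of \<mu> "(j, n)" \<nu>] by (auto simp: add.commute)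
    then show ?thesis using True by simp
  next
    case False
    then have "\<mu> \<noteq> unit_mon (j, n) + \<nu>" for \<nu>
      by (auto simp: lookup_add)
    then show ?thesis using False by simp
  qed
  finally show ?thesis .
qed

lemma pderiv_var_var_mult:
  "pderiv_var x (var j n * f) = (if x = (j, n) then f else 0) + var j n * pderiv_var x f"
proof (rule poly_mapping_eqI)
  fix \<mu>
  let ?w = "(j, n)"
  have shift: "\<mu> + unit_mon x - unit_mon ?w = \<mu> - unit_mon ?w + unit_mon x"
    if "0 < lookup \<mu> ?w" for x
    using that
    by (intro poly_mapping_eqI) (auto simp: lookup_add lookup_minus lookup_single when_def)
  show "lookup (pderiv_var x (var j n * f)) \<mu> =
      lookup ((if x = ?w then f else 0) + var j n * pderiv_var x f) \<mu>"
  proof (cases "x = ?w")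
    case True
    have "\<mu> - unit_mon ?w + unit_mon ?w = \<mu>" if "0 < lookup \<mu> ?w"
      using minus_unit_mon_eq_iff[OF that, of "\<mu> - unit_mon ?w"] by simp
    then show ?thesis using True
      by (simp add: lookup_pderiv_var lookup_var_mult lookup_add lookup_minus)
        (simp add: algebra_simps)
  next
    case False
    then show ?thesis
      by (auto simp: lookup_pderiv_var lookup_var_mult lookup_add lookup_minus lookup_single
          shift[simplified])
  qed
qed

lemma pderiv_var_add: "pderiv_var x (f + g) = pderiv_var x f + pderiv_var x g"
  by (rule poly_mapping_eqI) (simp add: lookup_pderiv_var lookup_add algebra_simps)

lemma pderiv_var_scalar_mult: "pderiv_var x (scalar c * f) = scalar c * pderiv_var x f"
  by (rule poly_mapping_eqI) (simp add: lookup_pderiv_var lookup_scalar_mult mult.left_commute)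

lemma a_op_add: "a_op q l A i n (f + g) = a_op q l A i n f + a_op q l A i n g"
  by (simp add: a_op_def pderiv_var_add smul_eq_scalar_mult distrib_left sum.distrib)

lemma a_op_scalar_mult: "a_op q l A i n (scalar c * f) = scalar c * a_op q l A i n f"
  by (simp add: a_op_def pderiv_var_scalar_mult smul_eq_scalar_mult sum_distrib_left
      mult.left_commute)

lemma a_op_var_mult:
  assumes "j \<in> {1..l}"
  shows "a_op q l A i n (var j m * f) = var j m * a_op q l A i n f +
    (if m = n then scalar (qint q (A i j * int n) * qint q (int n) / of_nat n) * f else 0)"
proof -
  define c where "c j' = scalar (qint q (A i j' * int n) * qint q (int n) / of_nat n)" for j'
  have "a_op q l A i n (var j m * f) =
      (\<Sum>j'\<in>{1..l}. (if j' = j \<and> n = m then c j' * f else 0)) +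
      var j m * (\<Sum>j'\<in>{1..l}. c j' * pderiv_var (j', n) f)"
    by (simp add: a_op_def smul_eq_scalar_mult pderiv_var_var_mult c_def distrib_left
        sum.distrib sum_distrib_left mult.left_commute if_distrib[of "\<lambda>x. _ * x"] conj_commute
        cong: if_cong)
  also have "(\<Sum>j'\<in>{1..l}. (if j' = j \<and> n = m then c j' * f else 0)) =
      (if m = n then c j * f else 0)"
    using assms by (auto simp: sum.delta)
  finally show ?thesis
    by (simp add: a_op_def smul_eq_scalar_mult c_def add.commute)
qed

text \<open>The coefficient \<open>c\<close> in \<open>E\<^sub>+(a,z) a\<^sub>k(-m) = (a\<^sub>k(-m) + c z^(-m)) E\<^sub>+(a,z)\<close>: the factor of
  \<open>a\<^sub>a(m)\<close> in \<open>Dop\<close> times the commutator \<open>[a\<^sub>a(m), a\<^sub>k(-m)]\<close>.\<close>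
definition E_comm_coeff :: "complex \<Rightarrow> complex \<Rightarrow> (nat \<Rightarrow> nat \<Rightarrow> int) \<Rightarrow> int \<Rightarrow> nat \<Rightarrow> nat \<Rightarrow> nat
    \<Rightarrow> complex" where
  "E_comm_coeff q qh A s a k m = (- of_int s * qh powi (- s * int m) / qint q (int m)) *
     (qint q (A a k * int m) * qint q (int m) / of_nat m)"

lemma E_comm_coeff_eq_0: "A a k = 0 \<Longrightarrow> E_comm_coeff q qh A s a k m = 0"
  by (simp add: E_comm_coeff_def qint_def)

lemma qint_nonzero:
  assumes q: "q \<noteq> 0" and not_root: "\<forall>d::nat. d > 0 \<longrightarrow> q ^ d \<noteq> 1" and "n \<noteq> 0"
  shows "qint q n \<noteq> 0"
proof -
  have "q - inverse q \<noteq> 0"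
  proof
    assume "q - inverse q = 0"
    then have "q ^ 2 = 1"
      using q by (simp add: field_simps power2_eq_square)
    then show False
      using not_root by auto
  qed
  moreover have "q powi n \<noteq> q powi (- n)"
  proof
    assume eq: "q powi n = q powi (- n)"
    have "q powi n * q powi (- n) = 1"
      using q by (simp add: power_int_minus)
    then have "q powi \<bar>n\<bar> * q powi \<bar>n\<bar> = 1"
      using eq by (cases "n \<ge> 0") simp_all
    then have "q ^ (2 * nat \<bar>n\<bar>) = 1"
      by (simp add: power_int_def power_mult_distrib power2_eq_square power_mult)
    then show False
      using not_root \<open>n \<noteq> 0\<close> by simp
  qed
  ultimately show ?thesis
    by (simp add: qint_def)
qed

lemma E_comm_coeff_nonzero:
  assumes "q \<noteq> 0" "\<forall>d::nat. d > 0 \<longrightarrow> q ^ d \<noteq> 1" "qh \<noteq> 0"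
    and "s \<noteq> 0" "1 \<le> m" "A a k \<noteq> 0"
  shows "E_comm_coeff q qh A s a k m \<noteq> 0"
  using assms qint_nonzero[OF assms(1,2), of "int m"]
    qint_nonzero[OF assms(1,2), of "A a k * int m"]
  by (auto simp: E_comm_coeff_def)

lemma Dop_add: "Dop q qh l A s a n (f + g) = Dop q qh l A s a n f + Dop q qh l A s a n g"
  by (simp add: Dop_def a_op_add smul_eq_scalar_mult distrib_left)

lemma Dop_zero: "Dop q qh l A s a n 0 = 0"
  using Dop_add[of q qh l A s a n 0 0] by simp

lemma Dop_scalar_mult: "Dop q qh l A s a n (scalar c * f) = scalar c * Dop q qh l A s a n f"
  by (simp add: Dop_def a_op_scalar_mult smul_eq_scalar_mult mult.left_commute)

lemma Dop_var_mult:
  assumes "k \<in> {1..l}"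
  shows "Dop q qh l A s a n (var k m * f) = var k m * Dop q qh l A s a n f +
    (if m = n then scalar (E_comm_coeff q qh A s a k n) * f else 0)"
  by (simp add: Dop_def a_op_var_mult[OF assms] smul_eq_scalar_mult E_comm_coeff_def
      distrib_left mult.left_commute scalar_mult_scalar flip: mult.assoc)

section \<open>Weights and the truncated exponential\<close>

definition mon_weight :: "mon \<Rightarrow> nat" where
  "mon_weight \<mu> = (\<Sum>x\<in>keys \<mu>. snd x * lookup \<mu> x)"

definition weight_le :: "nat \<Rightarrow> S \<Rightarrow> bool" where
  "weight_le W f \<longleftrightarrow> (\<forall>\<mu>\<in>keys f. mon_weight \<mu> \<le> W)"

lemma mon_weight_superset:
  "finite K \<Longrightarrow> keys \<mu> \<subseteq> K \<Longrightarrow> mon_weight \<mu> = (\<Sum>x\<in>K. snd x * lookup \<mu> x)"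
  unfolding mon_weight_def by (rule sum.mono_neutral_left) (auto simp: in_keys_iff)

lemma mon_weight_add: "mon_weight (\<mu> + \<nu>) = mon_weight \<mu> + mon_weight \<nu>"
proof -
  let ?K = "keys \<mu> \<union> keys \<nu>"
  have "mon_weight (\<mu> + \<nu>) = (\<Sum>x\<in>?K. snd x * lookup (\<mu> + \<nu>) x)"
    by (rule mon_weight_superset) (use keys_add[of \<mu> \<nu>] in auto)
  also have "\<dots> = (\<Sum>x\<in>?K. snd x * lookup \<mu> x) + (\<Sum>x\<in>?K. snd x * lookup \<nu> x)"
    by (simp add: lookup_add distrib_left sum.distrib)
  finally show ?thesis
    by (simp add: mon_weight_superset[of ?K \<mu>] mon_weight_superset[of ?K \<nu>])
qed

lemma mon_weight_single: "mon_weight (Poly_Mapping.single x d) = snd x * d"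
  by (simp add: mon_weight_def)

lemma weight_le_mono: "weight_le W f \<Longrightarrow> W \<le> W' \<Longrightarrow> weight_le W' f"
  by (auto simp: weight_le_def)

lemma weight_le_min: "weight_le W f \<Longrightarrow> weight_le W' f \<Longrightarrow> weight_le (min W W') f"
  by (auto simp: weight_le_def)

lemma weight_le_zero [simp]: "weight_le W 0"
  by (simp add: weight_le_def)

lemma weight_le_add: "weight_le W f \<Longrightarrow> weight_le W g \<Longrightarrow> weight_le W (f + g)"
  unfolding weight_le_def using keys_add[of f g] by blast

lemma weight_le_sum: "(\<And>x. x \<in> X \<Longrightarrow> weight_le W (g x)) \<Longrightarrow> weight_le W (sum g X)"
  by (induction X rule: infinite_finite_induct) (auto intro: weight_le_add)

lemma weight_le_scalar_mult: "weight_le W f \<Longrightarrow> weight_le W (scalar c * f)"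
  unfolding weight_le_def using keys_scalar_mult[of c f] by blast

lemma weight_le_var_mult: "weight_le W f \<Longrightarrow> weight_le (W + m) (var k m * f)"
  unfolding weight_le_def
proof
  fix \<mu> assume f: "\<forall>\<mu>\<in>keys f. mon_weight \<mu> \<le> W" and "\<mu> \<in> keys (var k m * f)"
  then obtain \<nu> where "\<nu> \<in> keys f" and "\<mu> = unit_mon (k, m) + \<nu>"
    using keys_mult[of "var k m" f] by (auto simp: var_def)
  then show "mon_weight \<mu> \<le> W + m"
    using f by (simp add: mon_weight_add mon_weight_single)
qed

lemma weight_le_wdeg: "weight_le (wdeg u) u"
  unfolding weight_le_def
proof
  fix \<mu> assume "\<mu> \<in> keys u"
  then show "mon_weight \<mu> \<le> wdeg u"
    unfolding wdeg_def mon_weight_def[symmetric] by (intro member_le_sum) simp_all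
qed

lemma pderiv_var_eq_0_of_weight_le: "weight_le W f \<Longrightarrow> W < snd x \<Longrightarrow> pderiv_var x f = 0"
proof (rule poly_mapping_eqI)
  fix \<mu> assume "weight_le W f" "W < snd x"
  moreover have "W < mon_weight (\<mu> + unit_mon x)"
    using \<open>W < snd x\<close> by (simp add: mon_weight_add mon_weight_single)
  ultimately have "lookup f (\<mu> + unit_mon x) = 0"
    by (meson in_keys_iff not_le weight_le_def)
  then show "lookup (pderiv_var x f) \<mu> = lookup 0 \<mu>"
    by (simp add: lookup_pderiv_var)
qed

lemma weight_le_pderiv_var: "weight_le W f \<Longrightarrow> weight_le (W - snd x) (pderiv_var x f)"
  unfolding weight_le_def
proof
  fix \<mu> assume f: "\<forall>\<mu>\<in>keys f. mon_weight \<mu> \<le> W" and "\<mu> \<in> keys (pderiv_var x f)"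
  then have "lookup f (\<mu> + unit_mon x) \<noteq> 0"
    by (simp add: in_keys_iff lookup_pderiv_var)
  then have "mon_weight (\<mu> + unit_mon x) \<le> W"
    using f by (simp add: in_keys_iff)
  then show "mon_weight \<mu> \<le> W - snd x"
    by (simp add: mon_weight_add mon_weight_single)
qed

lemma Dop_eq_0_of_weight_le: "weight_le W f \<Longrightarrow> W < n \<Longrightarrow> Dop q qh l A s a n f = 0"
  by (simp add: Dop_def a_op_def smul_eq_scalar_mult pderiv_var_eq_0_of_weight_le)

lemma weight_le_Dop: "weight_le W f \<Longrightarrow> weight_le (W - n) (Dop q qh l A s a n f)"
  unfolding Dop_def a_op_def smul_eq_scalar_mult
  by (intro weight_le_scalar_mult weight_le_sum)
    (metis weight_le_pderiv_var snd_conv)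

definition coeffs_weight_le :: "nat \<Rightarrow> S poly \<Rightarrow> bool" where
  "coeffs_weight_le W P \<longleftrightarrow> (\<forall>t. weight_le W (coeff P t))"

lemma coeffs_weight_le_mono: "coeffs_weight_le W P \<Longrightarrow> W \<le> W' \<Longrightarrow> coeffs_weight_le W' P"
  unfolding coeffs_weight_le_def using weight_le_mono by blast

lemma coeffs_weight_le_const: "weight_le W u \<Longrightarrow> coeffs_weight_le W [:u:]"
  unfolding coeffs_weight_le_def by (simp add: coeff_pCons split: nat.split)

lemma map_poly_smul: "map_poly (smul c) P = smult (scalar c) P"
  by (simp add: smult_conv_map_poly smul_eq_scalar_mult[abs_def])

lemma smult_sum_right: "smult c (\<Sum>x\<in>X. f x) = (\<Sum>x\<in>X. smult c (f x))"
  by (induction X rule: infinite_finite_induct) (simp_all add: smult_add_right)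

locale exp_annihilation =
  fixes q qh :: complex and l :: nat and A :: "nat \<Rightarrow> nat \<Rightarrow> int" and s :: int and a :: nat
begin

abbreviation D :: "nat \<Rightarrow> S \<Rightarrow> S" where "D \<equiv> Dop q qh l A s a"
abbreviation Z :: "nat \<Rightarrow> S poly \<Rightarrow> S poly" where "Z \<equiv> Zop q qh l A s a"

lemma coeff_Zop: "coeff (Z B P) t = (\<Sum>n\<in>{1..B}. if n \<le> t then D n (coeff P (t - n)) else 0)"
  unfolding Zop_def coeff_sum
  by (intro sum.cong refl) (auto simp: coeff_monom_mult coeff_map_poly Dop_zero)

lemma Zop_add: "Z B (P + Q) = Z B P + Z B Q"
  by (rule poly_eqI) (simp add: coeff_Zop Dop_add sum.distrib[symmetric] if_distrib cong: if_cong)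

lemma Zop_zero: "Z B 0 = 0"
  by (rule poly_eqI) (simp add: coeff_Zop Dop_zero cong: if_cong)

lemma Zop_monom_scalar_mult: "Z B (monom (scalar c) m * P) = monom (scalar c) m * Z B P"
proof (rule poly_eqI)
  fix t
  show "coeff (Z B (monom (scalar c) m * P)) t = coeff (monom (scalar c) m * Z B P) t"
  proof (cases "t < m")
    case True
    then show ?thesis unfolding coeff_Zop coeff_monom_mult
      by (auto simp: Dop_zero intro!: sum.neutral cong: if_cong)
  next
    case False
    then show ?thesis unfolding coeff_Zop coeff_monom_mult
      by (auto simp: Dop_scalar_mult Dop_zero sum_distrib_left diff_diff_add add.commute
          intro!: sum.cong cong: if_cong)
  qed
qed

lemma Zop_smult_scalar: "Z B (smult (scalar c) P) = smult (scalar c) (Z B P)"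
  using Zop_monom_scalar_mult[of B c 0 P]
  by (metis monom_0 pCons_0_0 mult_pCons_left mult_zero_left add_0_right)

lemma coeffs_weight_le_Zop: "coeffs_weight_le W P \<Longrightarrow> coeffs_weight_le (W - 1) (Z B P)"
  unfolding coeffs_weight_le_def coeff_Zop
proof (intro allI weight_le_sum)
  fix t n assume P: "\<forall>t. weight_le W (coeff P t)" and n: "n \<in> {1..B}"
  show "weight_le (W - 1) (if n \<le> t then D n (coeff P (t - n)) else 0)"
    using weight_le_Dop[OF P[rule_format, of "t - n"], where n=n and q=q and qh=qh and l=l and A=A
        and s=s and a=a] n
    by (auto intro: weight_le_mono)
qed

lemma Zop_eq_0_of_weight_0: "coeffs_weight_le 0 P \<Longrightarrow> Z B P = 0"
proof (rule poly_eqI)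
  fix t assume "coeffs_weight_le 0 P"
  then have "D n (coeff P (t - n)) = 0" if "n \<in> {1..B}" for n
    using that by (intro Dop_eq_0_of_weight_le[of 0]) (auto simp: coeffs_weight_le_def)
  then show "coeff (Z B P) t = coeff 0 t"
    unfolding coeff_Zop by (simp cong: if_cong)
qed

lemma Zop_cutoff: "coeffs_weight_le W P \<Longrightarrow> W \<le> B \<Longrightarrow> Z B P = Z W P"
proof (rule poly_eqI)
  fix t assume P: "coeffs_weight_le W P" and "W \<le> B"
  have "(\<Sum>n\<in>{1..B}. if n \<le> t then D n (coeff P (t - n)) else 0) =
        (\<Sum>n\<in>{1..W}. if n \<le> t then D n (coeff P (t - n)) else 0)"
  proof (rule sum.mono_neutral_right)
    show "\<forall>n\<in>{1..B} - {1..W}. (if n \<le> t then D n (coeff P (t - n)) else 0) = 0"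
      using P by (auto simp: coeffs_weight_le_def intro!: Dop_eq_0_of_weight_le[of W])
  qed (use \<open>W \<le> B\<close> in auto)
  then show "coeff (Z B P) t = coeff (Z W P) t"
    unfolding coeff_Zop .
qed

lemma Zop_smult_var:
  assumes "k \<in> {1..l}" "1 \<le> m" "m \<le> B"
  shows "Z B (smult (var k m) P) =
    smult (var k m) (Z B P) + monom (scalar (E_comm_coeff q qh A s a k m)) m * P"
proof (rule poly_eqI)
  fix t
  let ?c = "scalar (E_comm_coeff q qh A s a k m)"
  have "coeff (Z B (smult (var k m) P)) t =
     (\<Sum>n\<in>{1..B}. (if n \<le> t then var k m * D n (coeff P (t - n)) else 0) +
        (if n = m \<and> m \<le> t then ?c * coeff P (t - m) else 0))"
    unfolding coeff_Zop coeff_smult Dop_var_mult[OF assms(1)] by (intro sum.cong refl) auto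
  also have "\<dots> = var k m * coeff (Z B P) t + (if m \<le> t then ?c * coeff P (t - m) else 0)"
    unfolding sum.distrib coeff_Zop sum_distrib_left
    using assms(2,3) by (simp add: if_distrib sum.delta cong: if_cong)
  also have "\<dots> = coeff (smult (var k m) (Z B P) + monom ?c m * P) t"
    by (simp add: coeff_monom_mult)
  finally show "coeff (Z B (smult (var k m) P)) t =
      coeff (smult (var k m) (Z B P) + monom ?c m * P) t" .
qed

lemma Zop_power_add: "(Z B ^^ p) (P + Q) = (Z B ^^ p) P + (Z B ^^ p) Q"
  by (induction p) (simp_all add: Zop_add)

lemma Zop_power_zero: "(Z B ^^ p) 0 = 0"
  by (induction p) (simp_all add: Zop_zero)

lemma Zop_power_smult_scalar: "(Z B ^^ p) (smult (scalar c) P) = smult (scalar c) ((Z B ^^ p) P)"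
  by (induction p) (simp_all add: Zop_smult_scalar)

lemma Zop_power_Suc: "(Z B ^^ Suc p) P = (Z B ^^ p) (Z B P)"
  by (metis comp_apply funpow_Suc_right)

lemma Zop_power_eq_0: "coeffs_weight_le W P \<Longrightarrow> W < p \<Longrightarrow> (Z B ^^ p) P = 0"
proof (induction p arbitrary: W P)
  case (Suc p)
  show ?case
  proof (cases "W = 0")
    case True
    then show ?thesis
      using Zop_eq_0_of_weight_0 Suc.prems(1) by (simp only: Zop_power_Suc Zop_power_zero)
  next
    case False
    then have "W - 1 < p"
      using Suc.prems(2) by simp
    with coeffs_weight_le_Zop[OF Suc.prems(1)] show ?thesis
      unfolding Zop_power_Suc by (rule Suc.IH)
  qed
qed simp

lemma Zop_power_cutoff: "coeffs_weight_le W P \<Longrightarrow> W \<le> B \<Longrightarrow> (Z B ^^ p) P = (Z W ^^ p) P"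
proof (induction p arbitrary: P)
  case (Suc p)
  have "coeffs_weight_le W (Z W P)"
    using coeffs_weight_le_Zop[OF Suc.prems(1)] by (rule coeffs_weight_le_mono) simp
  then show ?case
    using Suc.IH Zop_cutoff[OF Suc.prems] Suc.prems(2) by (simp only: Zop_power_Suc)
qed simp

lemma Zop_power_smult_var:
  assumes "k \<in> {1..l}" "1 \<le> m" "m \<le> B"
  shows "(Z B ^^ p) (smult (var k m) P) = smult (var k m) ((Z B ^^ p) P) +
    monom (scalar (of_nat p * E_comm_coeff q qh A s a k m)) m * (Z B ^^ (p - 1)) P"
proof (induction p)
  case (Suc p)
  let ?c = "E_comm_coeff q qh A s a k m"
  have "(Z B ^^ Suc p) (smult (var k m) P) = smult (var k m) ((Z B ^^ Suc p) P) +
      (monom (scalar ?c) m * (Z B ^^ p) P + monom (scalar (of_nat p * ?c)) m * (Z B ^^ p) P)"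
    using Suc.IH by (cases p) (simp_all add: Zop_add Zop_monom_scalar_mult Zop_smult_var[OF assms]
        add.assoc)
  also have "monom (scalar ?c) m * (Z B ^^ p) P + monom (scalar (of_nat p * ?c)) m * (Z B ^^ p) P =
      monom (scalar (of_nat (Suc p) * ?c)) m * (Z B ^^ p) P"
    by (simp only: add_monom scalar_add flip: distrib_right) (simp add: algebra_simps)
  finally show ?case by simp
qed simp

text \<open>\<open>Dop n\<close> lowers the weight by \<open>n\<close>, so \<open>Z B\<close> is nilpotent on polynomials of bounded weight
  and the exponential series terminates; hence the truncation bounds built into \<open>Eplus\<close> can be
  replaced by any larger ones.\<close>
definition exp_Zop :: "nat \<Rightarrow> nat \<Rightarrow> S \<Rightarrow> S poly" where
  "exp_Zop B N u = (\<Sum>p<N. smult (scalar (1 / fact p)) ((Z B ^^ p) [:u:]))"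

lemma exp_Zop_cutoff:
  assumes "weight_le W u" "W \<le> B" "W < N"
  shows "exp_Zop B N u = exp_Zop W (Suc W) u"
proof -
  have P: "coeffs_weight_le W [:u:]"
    using assms(1) by (rule coeffs_weight_le_const)
  have "exp_Zop B N u = (\<Sum>p<N. smult (scalar (1 / fact p)) ((Z W ^^ p) [:u:]))"
    unfolding exp_Zop_def using Zop_power_cutoff[OF P assms(2)] by simp
  also have "\<dots> = (\<Sum>p<Suc W. smult (scalar (1 / fact p)) ((Z W ^^ p) [:u:]))"
    by (rule sum.mono_neutral_right) (use assms(3) Zop_power_eq_0[OF P] in auto)
  finally show ?thesis
    unfolding exp_Zop_def .
qed

lemma Eplus_eq_exp_Zop:
  assumes "weight_le W u" "W \<le> B" "W < N"
  shows "Eplus q qh l A s a u = exp_Zop B N u"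
proof -
  let ?W = "min W (wdeg u)"
  have W: "weight_le ?W u"
    using assms(1) weight_le_wdeg by (rule weight_le_min)
  have "Eplus q qh l A s a u = exp_Zop (wdeg u) (Suc (wdeg u)) u"
    unfolding Eplus_def Let_def exp_Zop_def map_poly_smul
    by (simp add: atLeast0AtMost lessThan_Suc_atMost)
  also have "\<dots> = exp_Zop ?W (Suc ?W) u"
    using W by (intro exp_Zop_cutoff) auto
  also have "\<dots> = exp_Zop B N u"
    using W assms by (intro exp_Zop_cutoff[symmetric]) auto
  finally show ?thesis .
qed

lemma exp_Zop_add: "exp_Zop B N (u + w) = exp_Zop B N u + exp_Zop B N w"
proof -
  have "[:u + w:] = [:u:] + [:w:]"
    by simp
  then show ?thesis
    unfolding exp_Zop_def by (simp only: Zop_power_add sum.distrib smult_add_right)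
qed

lemma exp_Zop_scalar_mult: "exp_Zop B N (scalar c * u) = smult (scalar c) (exp_Zop B N u)"
proof -
  have "[:scalar c * u:] = smult (scalar c) [:u:]"
    by simp
  then show ?thesis
    unfolding exp_Zop_def
    by (simp only: Zop_power_smult_scalar smult_sum_right smult_smult mult.commute)
qed

lemma exp_Zop_var_mult:
  assumes "k \<in> {1..l}" "1 \<le> m" "m \<le> B"
  shows "exp_Zop B (Suc B) (var k m * u) = smult (var k m) (exp_Zop B (Suc B) u) +
    monom (scalar (E_comm_coeff q qh A s a k m)) m * exp_Zop B B u"
proof -
  let ?c = "E_comm_coeff q qh A s a k m"
  define T where "T p = (Z B ^^ p) [:u:]" for p
  have "exp_Zop B (Suc B) (var k m * u) = (\<Sum>p<Suc B. smult (scalar (1 / fact p))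
      (smult (var k m) (T p) + monom (scalar (of_nat p * ?c)) m * T (p - 1)))"
    unfolding exp_Zop_def T_def
    by (simp only: Zop_power_smult_var[OF assms, symmetric] smult_pCons mult_zero_right
        smult_0_right)
  also have "\<dots> = smult (var k m) (exp_Zop B (Suc B) u) +
      (\<Sum>p<Suc B. smult (scalar (1 / fact p)) (monom (scalar (of_nat p * ?c)) m * T (p - 1)))"
    unfolding exp_Zop_def T_def
    by (simp only: smult_add_right sum.distrib smult_sum_right smult_smult mult.commute)
  also have "(\<Sum>p<Suc B. smult (scalar (1 / fact p)) (monom (scalar (of_nat p * ?c)) m * T (p - 1)))
      = (\<Sum>p<B. smult (scalar (1 / fact (Suc p))) (monom (scalar (of_nat (Suc p) * ?c)) m * T p))"
    by (subst sum.lessThan_Suc_shift) simp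
  also have "\<dots> = monom (scalar ?c) m * exp_Zop B B u"
    unfolding exp_Zop_def T_def[symmetric] sum_distrib_left
  proof (rule sum.cong[OF refl])
    fix p
    have "scalar (1 / fact (Suc p)) * scalar (of_nat (Suc p) * ?c) =
        scalar (1 / fact p) * scalar ?c"
      unfolding scalar_mult_scalar by (simp add: field_simps del: of_nat_Suc)
    then show "smult (scalar (1 / fact (Suc p))) (monom (scalar (of_nat (Suc p) * ?c)) m * T p) =
        monom (scalar ?c) m * smult (scalar (1 / fact p)) (T p)"
      by (simp only: smult_monom_mult mult_smult_right)
  qed
  finally show ?thesis .
qed

lemma Eplus_add: "Eplus q qh l A s a (u + w) = Eplus q qh l A s a u + Eplus q qh l A s a w"
proof -
  let ?W = "wdeg u + wdeg w + wdeg (u + w)"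
  have "weight_le ?W u" "weight_le ?W w" "weight_le ?W (u + w)"
    by (rule weight_le_mono[OF weight_le_wdeg]; simp)+
  then show ?thesis
    using Eplus_eq_exp_Zop[of ?W _ ?W "Suc ?W"] by (simp add: exp_Zop_add)
qed

lemma Eplus_scalar_mult:
  "Eplus q qh l A s a (scalar c * u) = smult (scalar c) (Eplus q qh l A s a u)"
proof -
  let ?W = "wdeg u + wdeg (scalar c * u)"
  have "weight_le ?W u" "weight_le ?W (scalar c * u)"
    by (rule weight_le_mono[OF weight_le_wdeg]; simp)+
  then show ?thesis
    using Eplus_eq_exp_Zop[of ?W _ ?W "Suc ?W"] by (simp add: exp_Zop_scalar_mult)
qed

lemma Eplus_var_mult:
  assumes "k \<in> {1..l}" "1 \<le> m"
  shows "Eplus q qh l A s a (var k m * u) = smult (var k m) (Eplus q qh l A s a u) +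
    monom (scalar (E_comm_coeff q qh A s a k m)) m * Eplus q qh l A s a u"
proof -
  let ?B = "wdeg u + m"
  have u: "weight_le (wdeg u) u"
    by (rule weight_le_wdeg)
  have "Eplus q qh l A s a (var k m * u) = exp_Zop ?B (Suc ?B) (var k m * u)"
    using Eplus_eq_exp_Zop[OF weight_le_var_mult[OF u]] by simp
  moreover have "Eplus q qh l A s a u = exp_Zop ?B (Suc ?B) u"
    and "Eplus q qh l A s a u = exp_Zop ?B ?B u"
    using Eplus_eq_exp_Zop[OF u] assms(2) by auto
  ultimately show ?thesis
    using exp_Zop_var_mult[of k m ?B u] assms by simp
qed

end

section \<open>Modes of the vertex operators\<close>

text \<open>The coefficient of \<open>z^(-n-1)\<close> in \<open>z\<^sup>d M(z) E(z^(-1))\<close>, where \<open>M(z) = \<Sum>\<^sub>p M p z\<^sup>p\<close>.\<close>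
definition mode_coeff :: "(int \<Rightarrow> S) \<Rightarrow> int \<Rightarrow> int \<Rightarrow> S poly \<Rightarrow> S" where
  "mode_coeff M n d E = (\<Sum>k\<in>{0..degree E}. M (int k - n - 1 - d) * coeff E k)"

lemma mode_coeff_superset:
  "degree E \<le> N \<Longrightarrow> mode_coeff M n d E = (\<Sum>k\<in>{0..N}. M (int k - n - 1 - d) * coeff E k)"
  unfolding mode_coeff_def by (rule sum.mono_neutral_left) (auto simp: coeff_eq_0)

lemma mode_coeff_add: "mode_coeff M n d (E + E') = mode_coeff M n d E + mode_coeff M n d E'"
proof -
  let ?N = "degree E + degree E'"
  have "degree (E + E') \<le> ?N"
    by (intro degree_add_le) auto
  then show ?thesis
    using mode_coeff_superset[of E ?N] mode_coeff_superset[of E' ?N]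
      mode_coeff_superset[of "E + E'" ?N]
    by (simp add: distrib_left sum.distrib)
qed

lemma mode_coeff_smult: "mode_coeff M n d (smult c E) = c * mode_coeff M n d E"
  using mode_coeff_superset[of "smult c E" "degree E"] degree_smult_le[of c E]
  by (simp add: mode_coeff_def sum_distrib_left mult.left_commute)

lemma mode_coeff_monom_mult: "mode_coeff M n d (monom c m * E) = c * mode_coeff M (n - int m) d E"
proof -
  let ?g = "\<lambda>k. M (int k - n - 1 - d) * coeff (monom c m * E) k"
  have "degree (monom c m * E) \<le> degree E + m"
    using degree_mult_le[of "monom c m" E] degree_monom_le[of c m] by simp
  then have "mode_coeff M n d (monom c m * E) = sum ?g {0..degree E + m}"
    by (rule mode_coeff_superset)
  also have "\<dots> = sum ?g {0 + m..degree E + m}"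
    by (rule sum.mono_neutral_right) (auto simp: coeff_monom_mult)
  also have "\<dots> = (\<Sum>k\<in>{0..degree E}. ?g (k + m))"
    by (rule sum.shift_bounds_cl_nat_ivl)
  also have "\<dots> = (\<Sum>k\<in>{0..degree E}. c * (M (int k - (n - int m) - 1 - d) * coeff E k))"
  proof (rule sum.cong[OF refl])
    fix k
    have "coeff (monom c m * E) (k + m) = c * coeff E k"
      by (simp add: coeff_monom_mult)
    then show "?g (k + m) = c * (M (int k - (n - int m) - 1 - d) * coeff E k)"
      by (simp add: algebra_simps)
  qed
  also have "\<dots> = c * mode_coeff M (n - int m) d E"
    by (simp add: mode_coeff_def sum_distrib_left)
  finally show ?thesis .
qed

lemma mode_coeff_shift: "mode_coeff M n (d + e) E = mode_coeff M (n + e) d E"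
  unfolding mode_coeff_def by (intro sum.cong refl) (simp add: algebra_simps)

lemma lookup_fscale: "lookup (fscale c v) \<beta> = scalar c * lookup v \<beta>"
  unfolding fscale_def by (simp add: lookup_map_zero smul_eq_scalar_mult)

lemma fscale_add: "fscale c (v + w) = fscale c v + fscale c w"
  by (rule poly_mapping_eqI) (simp add: lookup_fscale lookup_add distrib_left)

lemma fscale_zero_right: "fscale c 0 = 0"
  by (rule poly_mapping_eqI) (simp add: lookup_fscale)

lemma fscale_zero_left: "fscale 0 v = 0"
  by (rule poly_mapping_eqI) (simp add: lookup_fscale)

lemma fscale_one: "fscale 1 v = v"
  by (rule poly_mapping_eqI) (simp add: lookup_fscale)

lemma fscale_sum: "fscale c (\<Sum>x\<in>X. f x) = (\<Sum>x\<in>X. fscale c (f x))"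
  by (rule poly_mapping_eqI) (simp add: lookup_fscale lookup_sum sum_distrib_left)

lemma fscale_single: "fscale c (Poly_Mapping.single \<beta> u) = Poly_Mapping.single \<beta> (scalar c * u)"
  by (rule poly_mapping_eqI) (simp add: lookup_fscale lookup_single when_def)

lemma fscale_fscale: "fscale c (fscale d v) = fscale (c * d) v"
  by (rule poly_mapping_eqI) (simp only: lookup_fscale mult.assoc[symmetric] scalar_mult_scalar)

lemma fscale_eq_0_iff: "c \<noteq> 0 \<Longrightarrow> fscale c v = 0 \<longleftrightarrow> v = 0"
  by (metis fscale_fscale fscale_one fscale_zero_right nonzero_divide_eq_eq divide_self_if)

lemma keys_fscale: "keys (fscale c v) \<subseteq> keys v"
  by (auto simp: in_keys_iff lookup_fscale)

locale vertex_operator = exp_annihilation +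
  fixes eps :: "lat \<Rightarrow> lat \<Rightarrow> int"
begin

abbreviation E :: "S \<Rightarrow> S poly" where "E \<equiv> Eplus q qh l A s a"
abbreviation root :: lat where "root \<equiv> sscale s (sroot a)"

definition Xmode_component :: "int \<Rightarrow> lat \<Rightarrow> S \<Rightarrow> S" where
  "Xmode_component n \<beta> u = scalar (of_int (eps root \<beta>)) *
     mode_coeff (Mcoef q qh s a) n (s * form l A (sroot a) \<beta>) (E u)"

lemma Xmode_eq_sum_component:
  "Xmode q qh l A eps s a n v =
    (\<Sum>\<beta>\<in>keys v. Poly_Mapping.single (ladd \<beta> root) (Xmode_component n \<beta> (lookup v \<beta>)))"
  unfolding Xmode_def Let_def Xmode_component_def mode_coeff_def smul_eq_scalar_mult ..

lemma Xmode_component_add: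
  "Xmode_component n \<beta> (u + w) = Xmode_component n \<beta> u + Xmode_component n \<beta> w"
  unfolding Xmode_component_def Eplus_add mode_coeff_add by (simp add: distrib_left)

lemma Xmode_component_zero: "Xmode_component n \<beta> 0 = 0"
  using Xmode_component_add[of n \<beta> 0 0] by simp

lemma Xmode_component_scalar_mult:
  "Xmode_component n \<beta> (scalar c * u) = scalar c * Xmode_component n \<beta> u"
  unfolding Xmode_component_def Eplus_scalar_mult mode_coeff_smult by (simp add: mult.left_commute)

lemma Xmode_superset: "finite K \<Longrightarrow> keys v \<subseteq> K \<Longrightarrow>
    Xmode q qh l A eps s a n v =
      (\<Sum>\<beta>\<in>K. Poly_Mapping.single (ladd \<beta> root) (Xmode_component n \<beta> (lookup v \<beta>)))"
  unfolding Xmode_eq_sum_component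
  by (rule sum.mono_neutral_left) (auto simp: in_keys_iff Xmode_component_zero)

lemma Xmode_add:
  "Xmode q qh l A eps s a n (v + w) = Xmode q qh l A eps s a n v + Xmode q qh l A eps s a n w"
proof -
  let ?K = "keys v \<union> keys w"
  have "keys (v + w) \<subseteq> ?K"
    by (rule keys_add)
  then show ?thesis
    using Xmode_superset[of ?K "v + w" n] Xmode_superset[of ?K v n] Xmode_superset[of ?K w n]
    by (simp add: lookup_add Xmode_component_add single_add sum.distrib)
qed

lemma Xmode_fscale: "Xmode q qh l A eps s a n (fscale c v) = fscale c (Xmode q qh l A eps s a n v)"
proof -
  have "Xmode q qh l A eps s a n (fscale c v) =
      (\<Sum>\<beta>\<in>keys v. Poly_Mapping.single (ladd \<beta> root) (Xmode_component n \<beta> (lookup (fscale c v) \<beta>)))"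
    using keys_fscale by (intro Xmode_superset) auto
  then show ?thesis
    unfolding Xmode_eq_sum_component fscale_sum fscale_single lookup_fscale
      Xmode_component_scalar_mult .
qed

end

lemma opprod_Nil: "opprod [] = id"
  by (simp add: opprod_def)

lemma opprod_Cons: "opprod (f # fs) = f \<circ> opprod fs"
  by (simp add: opprod_def)

lemma opprod_append: "opprod (fs @ gs) = opprod fs \<circ> opprod gs"
  by (induction fs) (simp_all add: opprod_def)

section \<open>Multiplication by \<open>a\<^sub>k(-m)\<close>\<close>

definition mult_var_F :: "nat \<Rightarrow> nat \<Rightarrow> F \<Rightarrow> F" where
  "mult_var_F k m v = Poly_Mapping.map (\<lambda>u. var k m * u) v"

lemma lookup_mult_var_F: "lookup (mult_var_F k m v) \<beta> = var k m * lookup v \<beta>"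
  unfolding mult_var_F_def by (simp add: lookup_map_zero)

lemma mult_var_F_zero: "mult_var_F k m 0 = 0"
  by (rule poly_mapping_eqI) (simp add: lookup_mult_var_F)

lemma mult_var_F_sum: "mult_var_F k m (\<Sum>x\<in>X. f x) = (\<Sum>x\<in>X. mult_var_F k m (f x))"
  by (rule poly_mapping_eqI) (simp add: lookup_mult_var_F lookup_sum sum_distrib_left)

lemma mult_var_F_single:
  "mult_var_F k m (Poly_Mapping.single \<beta> u) = Poly_Mapping.single \<beta> (var k m * u)"
  by (rule poly_mapping_eqI) (simp add: lookup_mult_var_F lookup_single when_def)

lemma keys_mult_var_F: "keys (mult_var_F k m v) \<subseteq> keys v"
  by (auto simp: in_keys_iff lookup_mult_var_F)

lemma fscale_mult_var_F: "fscale c (mult_var_F k m v) = mult_var_F k m (fscale c v)"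
  by (rule poly_mapping_eqI) (simp add: lookup_fscale lookup_mult_var_F mult.left_commute)

context vertex_operator
begin

lemma Xmode_component_var_mult:
  "k \<in> {1..l} \<Longrightarrow> 1 \<le> m \<Longrightarrow>
    Xmode_component n \<beta> (var k m * u) = var k m * Xmode_component n \<beta> u +
      scalar (E_comm_coeff q qh A s a k m) * Xmode_component (n - int m) \<beta> u"
  unfolding Xmode_component_def Eplus_var_mult mode_coeff_add mode_coeff_smult mode_coeff_monom_mult
  by (simp add: distrib_left mult.left_commute)

lemma Xmode_mult_var_F:
  assumes "k \<in> {1..l}" "1 \<le> m"
  shows "Xmode q qh l A eps s a n (mult_var_F k m v) = mult_var_F k m (Xmode q qh l A eps s a n v) +
     fscale (E_comm_coeff q qh A s a k m) (Xmode q qh l A eps s a (n - int m) v)"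
proof -
  have "Xmode q qh l A eps s a n (mult_var_F k m v) =
      (\<Sum>\<beta>\<in>keys v. Poly_Mapping.single (ladd \<beta> root)
        (Xmode_component n \<beta> (lookup (mult_var_F k m v) \<beta>)))"
    using keys_mult_var_F by (intro Xmode_superset) auto
  then show ?thesis
    unfolding Xmode_eq_sum_component mult_var_F_sum fscale_sum mult_var_F_single fscale_single
      lookup_mult_var_F Xmode_component_var_mult[OF assms]
    by (simp add: single_add sum.distrib)
qed

end

definition commutes_with_var :: "nat \<Rightarrow> nat \<Rightarrow> (F \<Rightarrow> F) \<Rightarrow> bool" where
  "commutes_with_var k m f \<longleftrightarrow> (\<forall>v w. f (v + w) = f v + f w) \<and>
     (\<forall>c v. f (fscale c v) = fscale c (f v)) \<and> (\<forall>v. f (mult_var_F k m v) = mult_var_F k m (f v))"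

lemma commutes_with_var_opprod:
  "(\<And>f. f \<in> set fs \<Longrightarrow> commutes_with_var k m f) \<Longrightarrow> commutes_with_var k m (opprod fs)"
  by (induction fs) (simp_all add: commutes_with_var_def opprod_Nil opprod_Cons)

lemma Xmode_commutes_with_var:
  assumes "k \<in> {1..l}" "1 \<le> m" "A a k = 0"
  shows "commutes_with_var k m (Xmode q qh l A eps s a n)"
proof -
  interpret vertex_operator q qh l A s a eps .
  show ?thesis
    unfolding commutes_with_var_def
    using Xmode_add Xmode_fscale Xmode_mult_var_F[OF assms(1,2)]
      E_comm_coeff_eq_0[where A=A and a=a and k=k, OF assms(3)]
    by (simp add: fscale_zero_left)
qed

lemma Scoef_mult_var_F:
  assumes "k \<in> {1..l}" "1 \<le> m" "A i k = 0"
  shows "Scoef q qh l A eps s i j n ns (mult_var_F k m v) =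
    mult_var_F k m (Scoef q qh l A eps s i j n ns v) +
    fscale (E_comm_coeff q qh A s j k m) (Scoef q qh l A eps s i j (n - int m) ns v)"
proof -
  let ?X = "Xmode q qh l A eps s"
  let ?c = "E_comm_coeff q qh A s j k m"
  interpret J: vertex_operator q qh l A s j eps .
  have comm: "commutes_with_var k m (opprod (map (\<lambda>t. ?X i (ns (\<sigma> t))) ts))"
    for \<sigma> and ts :: "nat list"
    using Xmode_commutes_with_var[where A=A and a=i and k=k, OF assms]
    by (intro commutes_with_var_opprod) auto
  have "fscale d (opprod (map (\<lambda>t. ?X i (ns (\<sigma> t))) ts @ [?X j n'] @
      map (\<lambda>t. ?X i (ns (\<sigma> t))) ts') (mult_var_F k m v)) =
    mult_var_F k m (fscale d (opprod (map (\<lambda>t. ?X i (ns (\<sigma> t))) ts @ [?X j n'] @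
      map (\<lambda>t. ?X i (ns (\<sigma> t))) ts') v)) +
    fscale ?c (fscale d (opprod (map (\<lambda>t. ?X i (ns (\<sigma> t))) ts @ [?X j (n' - int m)] @
      map (\<lambda>t. ?X i (ns (\<sigma> t))) ts') v))" for d n' \<sigma> and ts ts' :: "nat list"
    using comm[of \<sigma> ts] comm[of \<sigma> ts']
    by (simp add: opprod_append opprod_Cons opprod_Nil commutes_with_var_def
        J.Xmode_mult_var_F[OF assms(1,2)] fscale_add fscale_mult_var_F fscale_fscale mult.commute)
  then show ?thesis
    unfolding Scoef_def Let_def by (simp only: mult_var_F_sum fscale_sum sum.distrib)
qed

lemma validF_mult_var_F:
  assumes v: "validF l v" and "k \<in> {1..l}" "1 \<le> m"
  shows "validF l (mult_var_F k m v)"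
  unfolding validF_def
proof (intro ballI conjI)
  fix \<beta> assume \<beta>: "\<beta> \<in> keys (mult_var_F k m v)"
  then have \<beta>v: "\<beta> \<in> keys v"
    using keys_mult_var_F by blast
  then show "inQ l \<beta>"
    using v by (simp add: validF_def)
  fix \<mu> x assume "\<mu> \<in> keys (lookup (mult_var_F k m v) \<beta>)" "x \<in> keys \<mu>"
  then obtain \<nu> where "\<nu> \<in> keys (lookup v \<beta>)" "x \<in> keys (unit_mon (k, m) + \<nu>)"
    using keys_mult[of "var k m" "lookup v \<beta>"] by (auto simp: lookup_mult_var_F var_def)
  then have "x = (k, m) \<or> x \<in> keys \<nu>"
    using keys_add[of "unit_mon (k, m)" \<nu>] by auto
  then show "fst x \<in> {1..l}" "1 \<le> snd x"
    using assms \<beta>v \<open>\<nu> \<in> keys (lookup v \<beta>)\<close> by (auto simp: validF_def)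
qed

lemma S_zero_diff:
  assumes "k \<in> {1..l}" "1 \<le> m" "A i k = 0" "E_comm_coeff q qh A s j k m \<noteq> 0"
    and S: "S_zero q qh l A eps s i j n"
  shows "S_zero q qh l A eps s i j (n - int m)"
  unfolding S_zero_def
proof (intro allI impI)
  fix ns v assume v: "validF l v"
  have "Scoef q qh l A eps s i j n ns (mult_var_F k m v) = 0"
    using S validF_mult_var_F[OF v assms(1,2)] by (simp add: S_zero_def)
  moreover have "Scoef q qh l A eps s i j n ns v = 0"
    using S v by (simp add: S_zero_def)
  ultimately have
    "fscale (E_comm_coeff q qh A s j k m) (Scoef q qh l A eps s i j (n - int m) ns v) = 0"
    using Scoef_mult_var_F[where A=A and i=i and k=k and m=m, OF assms(1-3)]
    by (simp add: mult_var_F_zero)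
  then show "Scoef q qh l A eps s i j (n - int m) ns v = 0"
    using fscale_eq_0_iff assms(4) by blast
qed

section \<open>Multiplication by \<open>e\<^sup>\<gamma>\<close>\<close>

lemma inQ_ladd: "inQ l \<beta> \<Longrightarrow> inQ l \<gamma> \<Longrightarrow> inQ l (ladd \<beta> \<gamma>)"
  by (simp add: inQ_def ladd_def)

lemma inQ_sroot: "i \<in> {1..l} \<Longrightarrow> inQ l (sroot i)"
  by (auto simp: inQ_def sroot_def)

lemma inQ_sscale: "inQ l \<beta> \<Longrightarrow> inQ l (sscale c \<beta>)"
  by (simp add: inQ_def sscale_def)

lemma ladd_right_commute: "ladd (ladd \<beta> \<gamma>) \<delta> = ladd (ladd \<beta> \<delta>) \<gamma>"
  by (simp add: ladd_def fun_eq_iff algebra_simps)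

lemma ladd_right_cancel: "ladd \<beta> \<gamma> = ladd \<beta>' \<gamma> \<longleftrightarrow> \<beta> = \<beta>'"
  by (simp add: ladd_def fun_eq_iff)

lemma form_ladd_right: "form l A \<beta> (ladd \<gamma> \<delta>) = form l A \<beta> \<gamma> + form l A \<beta> \<delta>"
  by (simp add: form_def ladd_def distrib_left sum.distrib)

lemma form_sroot_sscale_sroot:
  assumes "a \<in> {1..l}" "b \<in> {1..l}"
  shows "form l A (sroot a) (sscale c (sroot b)) = c * A a b"
proof -
  have "form l A (sroot a) (sscale c (sroot b)) =
      (\<Sum>x\<in>{1..l}. \<Sum>y\<in>{1..l}. if x = a \<and> y = b then c * A a b else 0)"
    unfolding form_def sroot_def sscale_def by (intro sum.cong refl) auto
  also have "\<dots> = (\<Sum>x\<in>{1..l}. if x = a then c * A a b else 0)"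
    using assms(2) by (intro sum.cong refl) (simp add: sum.delta)
  also have "\<dots> = c * A a b"
    using assms(1) by (simp add: sum.delta)
  finally show ?thesis .
qed

definition lattice_supported :: "nat \<Rightarrow> F \<Rightarrow> bool" where
  "lattice_supported l v \<longleftrightarrow> (\<forall>\<beta>\<in>keys v. inQ l \<beta>)"

lemma lattice_supported_zero [simp]: "lattice_supported l 0"
  by (simp add: lattice_supported_def)

lemma lattice_supported_single: "inQ l \<beta> \<Longrightarrow> lattice_supported l (Poly_Mapping.single \<beta> u)"
  by (simp add: lattice_supported_def)

lemma lattice_supported_add:
  "lattice_supported l v \<Longrightarrow> lattice_supported l w \<Longrightarrow> lattice_supported l (v + w)"
  unfolding lattice_supported_def using keys_add[of v w] by blast

lemma lattice_supported_sum:
  "(\<And>x. x \<in> X \<Longrightarrow> lattice_supported l (g x)) \<Longrightarrow> lattice_supported l (sum g X)"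
  by (induction X rule: infinite_finite_induct) (auto intro: lattice_supported_add)

lemma lattice_supported_fscale: "lattice_supported l v \<Longrightarrow> lattice_supported l (fscale c v)"
  unfolding lattice_supported_def using keys_fscale[of c v] by blast

lemma lattice_supported_Xmode:
  "a \<in> {1..l} \<Longrightarrow> lattice_supported l v \<Longrightarrow> lattice_supported l (Xmode q qh l A eps s a n v)"
  unfolding Xmode_def Let_def
  by (intro lattice_supported_sum lattice_supported_single inQ_ladd inQ_sscale inQ_sroot)
    (auto simp: lattice_supported_def)

lemma lattice_supported_opprod:
  "(\<And>f v. f \<in> set fs \<Longrightarrow> lattice_supported l v \<Longrightarrow> lattice_supported l (f v)) \<Longrightarrow>
    lattice_supported l v \<Longrightarrow> lattice_supported l (opprod fs v)"
  by (induction fs) (simp_all add: opprod_Nil opprod_Cons)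

lemma lattice_supported_Scoef:
  assumes "i \<in> {1..l}" "j \<in> {1..l}" "lattice_supported l v"
  shows "lattice_supported l (Scoef q qh l A eps s i j n ns v)"
  unfolding Scoef_def Let_def
  using lattice_supported_Xmode[OF assms(1)] lattice_supported_Xmode[OF assms(2)]
  by (intro lattice_supported_sum lattice_supported_fscale lattice_supported_opprod[OF _ assms(3)])
    auto

lemma validF_lattice_supported: "validF l v \<Longrightarrow> lattice_supported l v"
  by (simp add: validF_def lattice_supported_def)

definition e_mult :: "(lat \<Rightarrow> lat \<Rightarrow> int) \<Rightarrow> lat \<Rightarrow> F \<Rightarrow> F" where
  "e_mult eps \<gamma> v =
    (\<Sum>\<beta>\<in>keys v. Poly_Mapping.single (ladd \<beta> \<gamma>) (scalar (of_int (eps \<gamma> \<beta>)) * lookup v \<beta>))"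

lemma e_mult_superset: "finite K \<Longrightarrow> keys v \<subseteq> K \<Longrightarrow>
    e_mult eps \<gamma> v =
      (\<Sum>\<beta>\<in>K. Poly_Mapping.single (ladd \<beta> \<gamma>) (scalar (of_int (eps \<gamma> \<beta>)) * lookup v \<beta>))"
  unfolding e_mult_def by (rule sum.mono_neutral_left) (auto simp: in_keys_iff)

lemma e_mult_add: "e_mult eps \<gamma> (v + w) = e_mult eps \<gamma> v + e_mult eps \<gamma> w"
proof -
  let ?K = "keys v \<union> keys w"
  have "keys (v + w) \<subseteq> ?K"
    by (rule keys_add)
  then show ?thesis
    using e_mult_superset[of ?K "v + w"] e_mult_superset[of ?K v] e_mult_superset[of ?K w]
    by (simp add: lookup_add distrib_left single_add sum.distrib)
qed

lemma e_mult_zero: "e_mult eps \<gamma> 0 = 0"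
  by (simp add: e_mult_def)

lemma e_mult_sum: "e_mult eps \<gamma> (\<Sum>x\<in>X. f x) = (\<Sum>x\<in>X. e_mult eps \<gamma> (f x))"
  by (induction X rule: infinite_finite_induct) (simp_all add: e_mult_zero e_mult_add)

lemma e_mult_single: "e_mult eps \<gamma> (Poly_Mapping.single \<beta> u) =
    Poly_Mapping.single (ladd \<beta> \<gamma>) (scalar (of_int (eps \<gamma> \<beta>)) * u)"
  by (subst e_mult_superset[of "{\<beta>}"]) auto

lemma e_mult_fscale: "e_mult eps \<gamma> (fscale c v) = fscale c (e_mult eps \<gamma> v)"
proof -
  have "e_mult eps \<gamma> (fscale c v) = (\<Sum>\<beta>\<in>keys v.
      Poly_Mapping.single (ladd \<beta> \<gamma>) (scalar (of_int (eps \<gamma> \<beta>)) * lookup (fscale c v) \<beta>))"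
    using keys_fscale by (intro e_mult_superset) auto
  then show ?thesis
    unfolding e_mult_def fscale_sum fscale_single lookup_fscale by (simp add: mult.left_commute)
qed

lemma lookup_e_mult: "lookup (e_mult eps \<gamma> v) (ladd \<beta> \<gamma>) = scalar (of_int (eps \<gamma> \<beta>)) * lookup v \<beta>"
  unfolding e_mult_def lookup_sum
  by (simp add: lookup_single when_def ladd_right_cancel sum.delta' in_keys_iff cong: if_cong)

lemma keys_e_mult: "keys (e_mult eps \<gamma> v) \<subseteq> (\<lambda>\<beta>. ladd \<beta> \<gamma>) ` keys v"
proof -
  have "keys (e_mult eps \<gamma> v) \<subseteq> (\<Union>\<beta>\<in>keys v.
      keys (Poly_Mapping.single (ladd \<beta> \<gamma>) (scalar (of_int (eps \<gamma> \<beta>)) * lookup v \<beta>)))"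
    unfolding e_mult_def by (rule keys_sum)
  also have "\<dots> \<subseteq> (\<lambda>\<beta>. ladd \<beta> \<gamma>) ` keys v"
    by auto
  finally show ?thesis .
qed

lemma e_mult_eq_0_iff:
  assumes "cocycle l A eps" "inQ l \<gamma>" "lattice_supported l w"
  shows "e_mult eps \<gamma> w = 0 \<longleftrightarrow> w = 0"
proof
  assume w: "e_mult eps \<gamma> w = 0"
  show "w = 0"
  proof (rule poly_mapping_eqI)
    fix \<beta>
    show "lookup w \<beta> = lookup 0 \<beta>"
    proof (cases "\<beta> \<in> keys w")
      case True
      then have "eps \<gamma> \<beta> \<in> {1, -1}"
        using assms by (simp add: lattice_supported_def cocycle_def)
      then show ?thesis
        using lookup_e_mult[of eps \<gamma> w \<beta>] w scalar_mult_eq_0_iff by auto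
    qed (simp add: in_keys_iff)
  qed
qed (simp add: e_mult_zero)

definition cocycle_ratio :: "(lat \<Rightarrow> lat \<Rightarrow> int) \<Rightarrow> lat \<Rightarrow> lat \<Rightarrow> complex" where
  "cocycle_ratio eps \<alpha> \<gamma> = of_int (eps \<alpha> \<gamma>) / of_int (eps \<gamma> \<alpha>)"

lemma cocycle_ratio_nonzero:
  "cocycle l A eps \<Longrightarrow> inQ l \<alpha> \<Longrightarrow> inQ l \<gamma> \<Longrightarrow> cocycle_ratio eps \<alpha> \<gamma> \<noteq> 0"
  unfolding cocycle_def cocycle_ratio_def by force

context vertex_operator
begin

lemma Xmode_e_mult:
  assumes coc: "cocycle l A eps" and \<gamma>: "inQ l \<gamma>" and a: "a \<in> {1..l}"
    and v: "lattice_supported l v"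
  shows "Xmode q qh l A eps s a n (e_mult eps \<gamma> v) = fscale (cocycle_ratio eps root \<gamma>)
    (e_mult eps \<gamma> (Xmode q qh l A eps s a (n + s * form l A (sroot a) \<gamma>) v))"
proof -
  let ?\<delta> = "s * form l A (sroot a) \<gamma>"
  let ?z = "cocycle_ratio eps root \<gamma>"
  have root: "inQ l root"
    using a by (intro inQ_sscale inQ_sroot)
  have eps_add_left: "eps root (ladd \<beta> \<gamma>) = eps root \<beta> * eps root \<gamma>"
    and eps_add_right: "eps \<gamma> (ladd \<beta> root) = eps \<gamma> \<beta> * eps \<gamma> root" if "inQ l \<beta>" for \<beta>
    using coc root \<gamma> that by (simp_all add: cocycle_def)
  have "eps \<gamma> root \<in> {1, -1}"
    using coc root \<gamma> by (simp add: cocycle_def)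
  then have eps_nz: "complex_of_int (eps \<gamma> root) \<noteq> 0"
    by auto
  have comp: "Xmode_component n (ladd \<beta> \<gamma>) (lookup (e_mult eps \<gamma> v) (ladd \<beta> \<gamma>)) =
      scalar (?z * of_int (eps \<gamma> (ladd \<beta> root))) * Xmode_component (n + ?\<delta>) \<beta> (lookup v \<beta>)"
    if "inQ l \<beta>" for \<beta>
  proof -
    have sign: "complex_of_int (eps \<gamma> \<beta>) * of_int (eps root \<beta> * eps root \<gamma>) =
        ?z * of_int (eps \<gamma> (ladd \<beta> root)) * of_int (eps root \<beta>)"
      using eps_nz by (simp add: eps_add_right[OF that] cocycle_ratio_def field_simps)
    have "Xmode_component n (ladd \<beta> \<gamma>) (lookup (e_mult eps \<gamma> v) (ladd \<beta> \<gamma>)) =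
        scalar (of_int (eps \<gamma> \<beta>)) * (scalar (of_int (eps root \<beta> * eps root \<gamma>)) *
          mode_coeff (Mcoef q qh s a) (n + ?\<delta>) (s * form l A (sroot a) \<beta>) (E (lookup v \<beta>)))"
      unfolding lookup_e_mult Xmode_component_scalar_mult
      unfolding Xmode_component_def eps_add_left[OF that] form_ladd_right distrib_left
        mode_coeff_shift ..
    also have "\<dots> = scalar (?z * of_int (eps \<gamma> (ladd \<beta> root))) *
        Xmode_component (n + ?\<delta>) \<beta> (lookup v \<beta>)"
      using sign unfolding Xmode_component_def
      by (simp only: mult.assoc[symmetric] scalar_mult_scalar)
    finally show ?thesis .
  qed
  have "Xmode q qh l A eps s a n (e_mult eps \<gamma> v) = (\<Sum>\<beta>'\<in>(\<lambda>\<beta>. ladd \<beta> \<gamma>) ` keys v.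
      Poly_Mapping.single (ladd \<beta>' root) (Xmode_component n \<beta>' (lookup (e_mult eps \<gamma> v) \<beta>')))"
    using keys_e_mult by (intro Xmode_superset) auto
  also have "\<dots> = (\<Sum>\<beta>\<in>keys v. Poly_Mapping.single (ladd (ladd \<beta> root) \<gamma>)
      (scalar (?z * of_int (eps \<gamma> (ladd \<beta> root))) * Xmode_component (n + ?\<delta>) \<beta> (lookup v \<beta>)))"
    using v by (simp add: sum.reindex inj_on_def ladd_right_cancel comp ladd_right_commute
        lattice_supported_def)
  also have "\<dots> = fscale ?z (e_mult eps \<gamma> (Xmode q qh l A eps s a (n + ?\<delta>) v))"
    unfolding Xmode_eq_sum_component e_mult_sum e_mult_single fscale_sum fscale_single
    by (simp only: mult.assoc[symmetric] scalar_mult_scalar)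
  finally show ?thesis .
qed

end

definition intertwines :: "nat \<Rightarrow> (lat \<Rightarrow> lat \<Rightarrow> int) \<Rightarrow> lat \<Rightarrow> complex \<Rightarrow> (F \<Rightarrow> F) \<Rightarrow> (F \<Rightarrow> F) \<Rightarrow> bool"
  where "intertwines l eps \<gamma> c f h \<longleftrightarrow>
    (\<forall>v. lattice_supported l v \<longrightarrow> f (e_mult eps \<gamma> v) = fscale c (e_mult eps \<gamma> (h v)) \<and>
      lattice_supported l (h v)) \<and>
    (\<forall>d v. f (fscale d v) = fscale d (f v))"

lemma intertwines_Xmode:
  assumes "cocycle l A eps" "inQ l \<gamma>" "a \<in> {1..l}"
  shows "intertwines l eps \<gamma> (cocycle_ratio eps (sscale s (sroot a)) \<gamma>)
    (Xmode q qh l A eps s a n) (Xmode q qh l A eps s a (n + s * form l A (sroot a) \<gamma>))"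
proof -
  interpret vertex_operator q qh l A s a eps .
  show ?thesis
    unfolding intertwines_def
    using Xmode_e_mult[OF assms] lattice_supported_Xmode[OF assms(3)] Xmode_fscale by simp
qed

lemma opprod_e_mult:
  assumes "list_all (\<lambda>(c, f, h). intertwines l eps \<gamma> c f h) zs" "lattice_supported l v"
  shows "opprod (map (fst \<circ> snd) zs) (e_mult eps \<gamma> v) =
      fscale (prod_list (map fst zs)) (e_mult eps \<gamma> (opprod (map (snd \<circ> snd) zs) v)) \<and>
    lattice_supported l (opprod (map (snd \<circ> snd) zs) v)"
  using assms(1)
proof (induction zs)
  case Nil
  then show ?case
    using assms(2) by (simp add: opprod_Nil fscale_one)
next
  case (Cons z zs)
  obtain c f h where z: "z = (c, f, h)"
    by (cases z) auto
  with Cons show ?case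
    by (simp add: intertwines_def opprod_Cons fscale_fscale mult.commute)
qed

lemma Scoef_e_mult:
  assumes coc: "cocycle l A eps" and \<gamma>: "inQ l \<gamma>" and i: "i \<in> {1..l}" and j: "j \<in> {1..l}"
    and v: "lattice_supported l v"
  shows "Scoef q qh l A eps s i j n ns (e_mult eps \<gamma> v) =
    fscale (cocycle_ratio eps (sscale s (sroot i)) \<gamma> ^ nat (1 - A i j) *
        cocycle_ratio eps (sscale s (sroot j)) \<gamma>)
      (e_mult eps \<gamma> (Scoef q qh l A eps s i j (n + s * form l A (sroot j) \<gamma>)
        (\<lambda>t. ns t + s * form l A (sroot i) \<gamma>) v))"
proof -
  let ?X = "Xmode q qh l A eps s"
  let ?m = "nat (1 - A i j)"
  let ?zi = "cocycle_ratio eps (sscale s (sroot i)) \<gamma>"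
  let ?zj = "cocycle_ratio eps (sscale s (sroot j)) \<gamma>"
  let ?di = "s * form l A (sroot i) \<gamma>"
  let ?dj = "s * form l A (sroot j) \<gamma>"
  let ?ns = "\<lambda>t. ns t + ?di"
  define Xi where "Xi \<sigma> = (\<lambda>t. (?zi, ?X i (ns (\<sigma> t)), ?X i (?ns (\<sigma> t))))" for \<sigma> :: "nat \<Rightarrow> nat"
  define zs where "zs \<sigma> r = map (Xi \<sigma>) [1..<r+1] @ [(?zj, ?X j n, ?X j (n + ?dj))] @
      map (Xi \<sigma>) [r+1..<?m+1]" for \<sigma> r
  have "list_all (\<lambda>(c, f, h). intertwines l eps \<gamma> c f h) (zs \<sigma> r)" for \<sigma> r
    using intertwines_Xmode[OF coc \<gamma> i] intertwines_Xmode[OF coc \<gamma> j]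
    by (auto simp: zs_def Xi_def list_all_iff)
  note e_mult_zs = conjunct1[OF opprod_e_mult[OF this v]]
  define word where "word ns' n' \<sigma> r = map (\<lambda>t. ?X i (ns' (\<sigma> t))) [1..<r+1] @ [?X j n'] @
      map (\<lambda>t. ?X i (ns' (\<sigma> t))) [r+1..<?m+1]"
    for ns' :: "nat \<Rightarrow> int" and n' \<sigma> r
  have "map (fst \<circ> snd) (zs \<sigma> r) = word ns n \<sigma> r"
    and "map (snd \<circ> snd) (zs \<sigma> r) = word ?ns (n + ?dj) \<sigma> r" for \<sigma> r
    by (simp_all add: zs_def Xi_def word_def)
  moreover have "prod_list (map fst (zs \<sigma> r)) = ?zi ^ ?m * ?zj" if "r \<le> ?m" for \<sigma> r
  proof -
    have "prod_list (map fst (zs \<sigma> r)) = ?zi ^ (length [1..<r+1] + length [r+1..<?m+1]) * ?zj"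
      by (simp add: zs_def Xi_def o_def map_replicate_const prod_list_replicate power_add)
    also have "length [1..<r+1] + length [r+1..<?m+1] = ?m"
      using that by (simp only: length_upt)
    finally show ?thesis .
  qed
  ultimately have "fscale c (opprod (word ns n \<sigma> r) (e_mult eps \<gamma> v)) =
      fscale (?zi ^ ?m * ?zj) (e_mult eps \<gamma> (fscale c (opprod (word ?ns (n + ?dj) \<sigma> r) v)))"
    if "r \<in> {0..?m}" for c \<sigma> r
    using e_mult_zs[of \<sigma> r] that by (simp add: e_mult_fscale fscale_fscale mult.commute)
  then show ?thesis
    unfolding Scoef_def Let_def word_def by (simp only: e_mult_sum fscale_sum cong: sum.cong)
qed

lemma validF_e_mult:
  assumes v: "validF l v" and \<gamma>: "inQ l \<gamma>"
  shows "validF l (e_mult eps \<gamma> v)"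
  unfolding validF_def
proof (intro ballI conjI)
  fix \<beta> assume "\<beta> \<in> keys (e_mult eps \<gamma> v)"
  then obtain \<beta>\<^sub>0 where \<beta>\<^sub>0: "\<beta>\<^sub>0 \<in> keys v" and \<beta>: "\<beta> = ladd \<beta>\<^sub>0 \<gamma>"
    using keys_e_mult by blast
  then show "inQ l \<beta>"
    using assms by (auto simp: validF_def intro: inQ_ladd)
  fix \<mu> x assume "\<mu> \<in> keys (lookup (e_mult eps \<gamma> v) \<beta>)" "x \<in> keys \<mu>"
  moreover have "keys (lookup (e_mult eps \<gamma> v) \<beta>) \<subseteq> keys (lookup v \<beta>\<^sub>0)"
    unfolding \<beta> lookup_e_mult by (rule keys_scalar_mult)
  ultimately show "fst x \<in> {1..l}" "1 \<le> snd x"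
    using v \<beta>\<^sub>0 by (auto simp: validF_def)
qed

lemma S_zero_shift:
  assumes coc: "cocycle l A eps" and \<gamma>: "inQ l \<gamma>" and i: "i \<in> {1..l}" and j: "j \<in> {1..l}"
    and S: "S_zero q qh l A eps s i j n"
  shows "S_zero q qh l A eps s i j (n + s * form l A (sroot j) \<gamma>)"
  unfolding S_zero_def
proof (intro allI impI)
  fix ns v assume v: "validF l v"
  let ?ns = "\<lambda>t::nat. ns t - s * form l A (sroot i) \<gamma>"
  let ?c = "cocycle_ratio eps (sscale s (sroot i)) \<gamma> ^ nat (1 - A i j) *
    cocycle_ratio eps (sscale s (sroot j)) \<gamma>"
  have "?c \<noteq> 0"
    using cocycle_ratio_nonzero[OF coc _ \<gamma>] i j by (simp add: inQ_sscale inQ_sroot)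
  moreover have "Scoef q qh l A eps s i j n ?ns (e_mult eps \<gamma> v) = 0"
    using S validF_e_mult[OF v \<gamma>] by (simp add: S_zero_def)
  ultimately have "e_mult eps \<gamma> (Scoef q qh l A eps s i j (n + s * form l A (sroot j) \<gamma>) ns v) = 0"
    using Scoef_e_mult[OF coc \<gamma> i j validF_lattice_supported[OF v], of q qh s n ?ns]
    by (simp add: fscale_eq_0_iff)
  then show "Scoef q qh l A eps s i j (n + s * form l A (sroot j) \<gamma>) ns v = 0"
    using e_mult_eq_0_iff[OF coc \<gamma> lattice_supported_Scoef[OF i j validF_lattice_supported[OF v]]]
    by blast
qed

section \<open>Reaching every mode\<close>

lemma sym_GCM_symmetric: "sym_GCM l A \<Longrightarrow> i \<in> {1..l} \<Longrightarrow> j \<in> {1..l} \<Longrightarrow> A i j = A j i"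
  unfolding sym_GCM_def by (cases "i = j") auto

lemma int_all_if_closed_down_and_up:
  fixes P :: "int \<Rightarrow> bool"
  assumes start: "P n\<^sub>0" and down: "\<And>n. P n \<Longrightarrow> P (n - 1)" and up: "\<And>n. P n \<Longrightarrow> P (n + d)"
    and "0 < d"
  shows "P n"
proof -
  have up_iter: "P (n\<^sub>0 + int t * d)" for t
  proof (induction t)
    case (Suc t)
    then show ?case
      using up[OF Suc] by (simp add: algebra_simps)
  qed (simp add: start)
  define N where "N = n\<^sub>0 + int (nat (n - n\<^sub>0)) * d"
  have "n - n\<^sub>0 \<le> int (nat (n - n\<^sub>0))"
    by simp
  also have "\<dots> \<le> int (nat (n - n\<^sub>0)) * d"
    using \<open>0 < d\<close> by (simp add: mult_le_cancel_left1)
  finally have "n \<le> N"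
    unfolding N_def by simp
  moreover have "P N"
    unfolding N_def by (rule up_iter)
  ultimately show "P n"
    using down by (rule int_le_induct)
qed

theorem mainTheorem6:
  fixes l :: nat and A :: "nat \<Rightarrow> nat \<Rightarrow> int" and q qh :: complex
    and eps :: "lat \<Rightarrow> lat \<Rightarrow> int" and s :: int and i j k :: nat
  assumes "sym_GCM l A"
    and "q \<noteq> 0" and "\<forall>d::nat. d > 0 \<longrightarrow> q ^ d \<noteq> 1" and "qh ^ 2 = q"
    and "cocycle l A eps"
    and "s \<in> {1, -1}"
    and "i \<in> {1..l}" and "j \<in> {1..l}" and "i \<noteq> j"
    and "k \<in> {1..l}" and "A k i = 0" and "A k j \<noteq> 0"
    and "\<exists>n0. S_zero q qh l A eps s i j n0"
  shows "\<forall>n. S_zero q qh l A eps s i j n"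
proof
  fix n
  let ?P = "S_zero q qh l A eps s i j"
  have Aik: "A i k = 0" and Ajk: "A j k \<noteq> 0"
    using assms(1,7,8,10-12) sym_GCM_symmetric by metis+
  have "qh \<noteq> 0"
    using assms(2,4) by auto
  then have "E_comm_coeff q qh A s j k 1 \<noteq> 0"
    using assms(2,3,6) Ajk by (intro E_comm_coeff_nonzero) auto
  then have down: "?P m \<Longrightarrow> ?P (m - 1)" for m
    using S_zero_diff[where A=A and i=i and k=k and m=1 and j=j, OF assms(10) _ Aik] by simp
  have "s * form l A (sroot j) (sscale (s * sgn (A j k)) (sroot k)) = \<bar>A j k\<bar>"
    using assms(6) by (auto simp: form_sroot_sscale_sroot[OF assms(8,10)] abs_sgn)
  then have up: "?P m \<Longrightarrow> ?P (m + \<bar>A j k\<bar>)" for m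
    using S_zero_shift[OF assms(5) _ assms(7,8)] assms(10) by (metis inQ_sscale inQ_sroot)
  show "?P n"
    using assms(13) down up Ajk by (metis int_all_if_closed_down_and_up zero_less_abs_iff)
qed

end
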